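(* Let $\mathcal{C}$ be the Cesàro operator $\mathcal{C}(x)=\big(\frac1n\sum_{i=1}^n x_i\big)_n$. Fix $1\le p<\infty$ and $1<q,r<\infty$, and let $T\colon\ell^p\to\ell^q$ be a nontrivial continuous linear operator with matrix $a_{ij}=T(e^j)_i$. Let $h=(h_j)\in\ell^{s_{pr}}$, and write $s=s_{rq}$ and $s'$ for its conjugate exponent. The following are equivalent: (a) There exists $g\in\ell^{s}$ such that $T(x)=g\,\mathcal{C}(hx)$ for all $x\in\ell^p$ (here $\mathcal{C}\colon\ell^r\to\ell^r$). (b) There exists $g=(g_i)\in\ell^{s}$ such that $a_{ij}=g_ih_j/i$ if $j\le i$ and $a_{ij}=0$ if $j>i$. (c) There exists $C>0$ such that $$\sum_{i=1}^n\sum_{j=1}^m r_{ij}a_{ij}\le C\Big(\sum_{i=1}^n\frac{1}{i^{s'}}\Big|\sum_{j=1}^{\min\{i,m\}}h_jr_{ij}\Big|^{s'}\Big)^{1/s'}$$ for all $n,m\in\mathbb{N}$ and all real $(r_{ij})$ with $|r_{ij}|\le1$. Moreover, if $r\le q$, then (a)–(c) are equivalent to: (d) There exists $C>0$ such that $\sum_{j=1}^m r_ja_{nj}\le C\frac1n\big|\sum_{j=1}^{\min\{n,m\}}h_jr_j\big|$ for all $n,m\in\mathbb{N}$ and all real $(r_j)$ with $|r_j|\le1$.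
   Context: $(e^n)$ denotes the standard unit vectors. For exponents $1\le a,b\le\infty$, $s_{ab}=\frac{ab}{a-b}$ if $1\le b<a<\infty$; $s_{ab}=b$ if $1\le b<a=\infty$; $s_{ab}=\infty$ if $1\le a\le b\le\infty$. Products of sequences are coordinatewise. $\mathcal{C}$ is bounded on $\ell^r$ for $1<r<\infty$. *)

theory Defs
  imports Complex_Main "HOL-Library.Extended_Real"
begin

text \<open>Real sequences are functions nat \<Rightarrow> real, indexed from 0:
  index k corresponds to the paper's coordinate k+1.\<close>

definition in_lp :: "ereal \<Rightarrow> (nat \<Rightarrow> real) \<Rightarrow> bool" where
  "in_lp p x = (if p = \<infinity> then bdd_above (range (\<lambda>n. \<bar>x n\<bar>))
               else summable (\<lambda>n. \<bar>x n\<bar> powr real_of_ereal p))"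

definition lp_norm :: "real \<Rightarrow> (nat \<Rightarrow> real) \<Rightarrow> real" where
  "lp_norm p x = (\<Sum>n. \<bar>x n\<bar> powr p) powr (1 / p)"

definition s_exp :: "real \<Rightarrow> real \<Rightarrow> ereal" where
  "s_exp a b = (if b < a then ereal (a * b / (a - b)) else \<infinity>)"

definition conj_exp :: "ereal \<Rightarrow> real" where
  "conj_exp s = (if s = \<infinity> then 1 else real_of_ereal s / (real_of_ereal s - 1))"

definition unit_vec :: "nat \<Rightarrow> nat \<Rightarrow> real" where
  "unit_vec j = (\<lambda>k. if k = j then 1 else 0)"

text \<open>Cesaro operator: C(x)_n = (1/n) \<Sum>_{i=1}^n x_i, shifted to 0-based indexing.\<close>
definition cesaro :: "(nat \<Rightarrow> real) \<Rightarrow> nat \<Rightarrow> real" where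
  "cesaro x = (\<lambda>n. (\<Sum>i\<le>n. x i) / real (n + 1))"

definition bounded_lin_op :: "real \<Rightarrow> real \<Rightarrow> ((nat \<Rightarrow> real) \<Rightarrow> (nat \<Rightarrow> real)) \<Rightarrow> bool" where
  "bounded_lin_op p q T \<longleftrightarrow>
     (\<forall>x. in_lp (ereal p) x \<longrightarrow> in_lp (ereal q) (T x)) \<and>
     (\<forall>x y. in_lp (ereal p) x \<longrightarrow> in_lp (ereal p) y \<longrightarrow> T (\<lambda>k. x k + y k) = (\<lambda>k. T x k + T y k)) \<and>
     (\<forall>c x. in_lp (ereal p) x \<longrightarrow> T (\<lambda>k. c * x k) = (\<lambda>k. c * T x k)) \<and>
     (\<exists>K. \<forall>x. in_lp (ereal p) x \<longrightarrow> lp_norm q (T x) \<le> K * lp_norm p x)"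

end

theory Submission
  imports Defs "HOL-Analysis.Convex" "HOL-Analysis.Elementary_Normed_Spaces"
begin

text \<open>A bounded operator on l^p is determined by its matrix, since the truncations of x
  converge to x in l^p; this makes (a) and (b) the same statement. Testing (c) with a single row gives (d). Testing (d) with
  \<open>h_k e_j - h_j e_k\<close>, which h annihilates, makes every row proportional to h, so
  \<open>a_ij = g_i h_j / i\<close> with g bounded. Holder's inequality gives (b) \<open>\<Longrightarrow>\<close> (c); conversely,
  testing (c) on the column of the first nonzero \<open>h_j\<close> and dualising bounds the s-norm of g.
  For \<open>r \<le> q\<close> one has \<open>s = \<infinity>\<close> and \<open>s' = 1\<close>, and then (c) is (d) summed over the rows.\<close>

lemma in_lp_ereal_iff: "in_lp (ereal p) x \<longleftrightarrow> summable (\<lambda>n. \<bar>x n\<bar> powr p)"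
  by (simp add: in_lp_def)

lemma in_lp_infinity_iff: "in_lp \<infinity> x \<longleftrightarrow> bdd_above (range (\<lambda>n. \<bar>x n\<bar>))"
  by (simp add: in_lp_def)

lemma in_lp_finite_support:
  assumes "p > 0" "finite N" "\<And>n. n \<notin> N \<Longrightarrow> x n = 0"
  shows "in_lp (ereal p) x"
  unfolding in_lp_ereal_iff using assms by (intro summable_finite[of N]) auto

lemma in_lp_unit_vec: "p > 0 \<Longrightarrow> in_lp (ereal p) (unit_vec j)"
  by (rule in_lp_finite_support[of p "{j}"]) (auto simp: unit_vec_def)

lemma abs_le_lp_norm:
  assumes "in_lp (ereal q) y" "q > 0"
  shows "\<bar>y i\<bar> \<le> lp_norm q y"
proof -
  have "\<bar>y i\<bar> powr q \<le> (\<Sum>n. \<bar>y n\<bar> powr q)"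
    using sum_le_suminf[of "\<lambda>n. \<bar>y n\<bar> powr q" "{i}"] assms(1) by (simp add: in_lp_ereal_iff)
  then have "(\<bar>y i\<bar> powr q) powr (1/q) \<le> (\<Sum>n. \<bar>y n\<bar> powr q) powr (1/q)"
    by (rule powr_mono2[rotated 2]) (use assms in auto)
  then show ?thesis
    using assms by (simp add: lp_norm_def powr_powr)
qed

lemma lp_norm_tail_tendsto_zero:
  assumes "in_lp (ereal p) x" "p > 0"
  shows "(\<lambda>N. lp_norm p (\<lambda>k. if k < N then 0 else x k)) \<longlonglongrightarrow> 0"
proof -
  define F where "F = (\<lambda>n. \<bar>x n\<bar> powr p)"
  have sm: "summable F" using assms(1) by (simp add: in_lp_ereal_iff F_def)
  have tail_sm: "summable (\<lambda>k. \<bar>if k < N then 0 else x k\<bar> powr p)" for N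
    by (rule summable_comparison_test'[OF sm, of N]) (auto simp: F_def)
  have tail_eq: "(\<Sum>k. \<bar>if k < N then 0 else x k\<bar> powr p) = suminf F - (\<Sum>i<N. F i)" for N
    using suminf_split_initial_segment[OF tail_sm, of N N] suminf_split_initial_segment[OF sm, of N]
    by (simp add: F_def)
  have "(\<lambda>N. suminf F - (\<Sum>i<N. F i)) \<longlonglongrightarrow> suminf F - suminf F"
    by (intro tendsto_diff tendsto_const summable_LIMSEQ sm)
  then have "(\<lambda>N. (\<Sum>k. \<bar>if k < N then 0 else x k\<bar> powr p)) \<longlonglongrightarrow> 0"
    by (simp add: tail_eq)
  then show ?thesis
    unfolding lp_norm_def
    by (rule tendsto_zero_powrI[OF _ tendsto_const])
      (use assms tail_sm in \<open>auto intro!: always_eventually suminf_nonneg\<close>)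
qed

lemma
  assumes "bounded_lin_op p q T" "in_lp (ereal p) x"
  shows bounded_lin_op_in_lp: "in_lp (ereal q) (T x)"
    and bounded_lin_op_add: "in_lp (ereal p) y \<Longrightarrow> T (\<lambda>k. x k + y k) = (\<lambda>k. T x k + T y k)"
    and bounded_lin_op_scale: "T (\<lambda>k. c * x k) = (\<lambda>k. c * T x k)"
  using assms unfolding bounded_lin_op_def by blast+

lemma bounded_lin_op_truncation:
  assumes T: "bounded_lin_op p q T" and p: "p > 0"
  shows "T (\<lambda>k. if k < N then x k else 0) = (\<lambda>i. \<Sum>j<N. x j * T (unit_vec j) i)"
proof (induction N)
  case 0
  have "in_lp (ereal p) (\<lambda>_. 0)"
    by (rule in_lp_finite_support[OF p, of "{}"]) auto
  from bounded_lin_op_scale[OF T this, of 0] show ?case by simp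
next
  case (Suc N)
  have trunc: "in_lp (ereal p) (\<lambda>k. if k < N then x k else 0)"
    by (rule in_lp_finite_support[OF p, of "{..<N}"]) auto
  have unit: "in_lp (ereal p) (\<lambda>k. x N * unit_vec N k)"
    by (rule in_lp_finite_support[OF p, of "{N}"]) (auto simp: unit_vec_def)
  have "(\<lambda>k. if k < Suc N then x k else 0) = (\<lambda>k. (if k < N then x k else 0) + x N * unit_vec N k)"
    by (auto simp: unit_vec_def less_Suc_eq)
  then have "T (\<lambda>k. if k < Suc N then x k else 0)
      = (\<lambda>k. T (\<lambda>k. if k < N then x k else 0) k + T (\<lambda>k. x N * unit_vec N k) k)"
    by (simp add: bounded_lin_op_add[OF T trunc unit])
  then show ?case
    by (simp add: Suc bounded_lin_op_scale[OF T in_lp_unit_vec[OF p]])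
qed

lemma bounded_lin_op_coord_sums:
  assumes T: "bounded_lin_op p q T" and p: "p > 0" and q: "q > 0" and x: "in_lp (ereal p) x"
  shows "(\<lambda>j. x j * T (unit_vec j) i) sums T x i"
proof -
  obtain K where K: "\<And>y. in_lp (ereal p) y \<Longrightarrow> lp_norm q (T y) \<le> K * lp_norm p y"
    using T unfolding bounded_lin_op_def by blast
  define tail where "tail N = (\<lambda>k. if k < N then 0 else x k)" for N
  have tail_lp: "in_lp (ereal p) (tail N)" for N
    using x unfolding in_lp_ereal_iff tail_def by (rule summable_comparison_test'[of _ N]) auto
  have trunc_lp: "in_lp (ereal p) (\<lambda>k. if k < N then x k else 0)" for N
    by (rule in_lp_finite_support[OF p, of "{..<N}"]) auto
  have partial: "(\<Sum>j<N. x j * T (unit_vec j) i) = T x i - T (tail N) i" for N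
  proof -
    have "x = (\<lambda>k. (if k < N then x k else 0) + tail N k)"
      by (auto simp: tail_def)
    then have "T x i = T (\<lambda>k. if k < N then x k else 0) i + T (tail N) i"
      by (metis bounded_lin_op_add[OF T trunc_lp tail_lp])
    then show ?thesis
      by (simp add: bounded_lin_op_truncation[OF T p])
  qed
  have bound: "\<forall>N. norm (T (tail N) i) \<le> K * lp_norm p (tail N)"
    using abs_le_lp_norm[OF bounded_lin_op_in_lp[OF T tail_lp] q] K[OF tail_lp] by (simp, meson order_trans)
  have "(\<lambda>N. K * lp_norm p (tail N)) \<longlonglongrightarrow> 0"
    using tendsto_mult_right_zero[OF lp_norm_tail_tendsto_zero[OF x p]] by (simp add: tail_def)
  then have "(\<lambda>N. T (tail N) i) \<longlonglongrightarrow> 0"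
    by (rule Lim_null_comparison[OF always_eventually[OF bound]])
  then have "(\<lambda>N. T x i - T (tail N) i) \<longlonglongrightarrow> T x i - 0"
    by (intro tendsto_diff tendsto_const)
  then show ?thesis
    by (simp add: sums_def partial)
qed

definition cesaro_matrix :: "(nat \<Rightarrow> nat \<Rightarrow> real) \<Rightarrow> (nat \<Rightarrow> real) \<Rightarrow> (nat \<Rightarrow> real) \<Rightarrow> bool" where
  "cesaro_matrix a h g \<longleftrightarrow> (\<forall>i j. a i j = (if j \<le> i then g i * h j / real (i + 1) else 0))"

lemma cesaro_mult_unit_vec:
  "cesaro (\<lambda>k. h k * unit_vec j k) i = (if j \<le> i then h j / real (i + 1) else 0)"
  unfolding cesaro_def unit_vec_def by (simp add: if_distrib cong: if_cong)

lemma cesaro_matrix_iff_operator: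
  assumes T: "bounded_lin_op p q T" and p: "p > 0" and q: "q > 0"
    and a_def: "\<And>i j. a i j = T (unit_vec j) i"
  shows "(\<forall>x. in_lp (ereal p) x \<longrightarrow> T x = (\<lambda>n. g n * cesaro (\<lambda>k. h k * x k) n))
         \<longleftrightarrow> cesaro_matrix a h g"
proof
  assume "\<forall>x. in_lp (ereal p) x \<longrightarrow> T x = (\<lambda>n. g n * cesaro (\<lambda>k. h k * x k) n)"
  then show "cesaro_matrix a h g"
    using in_lp_unit_vec[OF p] by (auto simp: cesaro_matrix_def a_def cesaro_mult_unit_vec)
next
  assume mat: "cesaro_matrix a h g"
  show "\<forall>x. in_lp (ereal p) x \<longrightarrow> T x = (\<lambda>n. g n * cesaro (\<lambda>k. h k * x k) n)"
  proof (intro allI impI ext)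
    fix x i assume x: "in_lp (ereal p) x"
    have "(\<lambda>j. x j * a i j) sums (\<Sum>j\<le>i. x j * a i j)"
      using mat by (intro sums_finite) (auto simp: cesaro_matrix_def)
    moreover have "(\<lambda>j. x j * a i j) sums T x i"
      using bounded_lin_op_coord_sums[OF T p q x] by (simp add: a_def)
    ultimately have "T x i = (\<Sum>j\<le>i. x j * a i j)"
      by (rule sums_unique2[symmetric])
    also have "\<dots> = g i * cesaro (\<lambda>k. h k * x k) i"
      using mat by (simp add: cesaro_matrix_def cesaro_def sum_divide_distrib sum_distrib_left mult_ac)
    finally show "T x i = g i * cesaro (\<lambda>k. h k * x k) i" .
  qed
qed

lemma Holder_inequality_sum:
  fixes x y :: "'a \<Rightarrow> real"
  assumes A: "finite A" and s: "s > 1" and t: "t > 1" and st: "1/s + 1/t = 1"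
  shows "(\<Sum>i\<in>A. x i * y i) \<le> (\<Sum>i\<in>A. \<bar>x i\<bar> powr s) powr (1/s) * (\<Sum>i\<in>A. \<bar>y i\<bar> powr t) powr (1/t)"
proof -
  define SX where "SX = (\<Sum>i\<in>A. \<bar>x i\<bar> powr s)"
  define SY where "SY = (\<Sum>i\<in>A. \<bar>y i\<bar> powr t)"
  show ?thesis
  proof (cases "SX = 0 \<or> SY = 0")
    case True
    then have "\<forall>i\<in>A. x i * y i = 0"
      using A by (auto simp: SX_def SY_def sum_nonneg_eq_0_iff)
    then have "(\<Sum>i\<in>A. x i * y i) = 0"
      by (simp add: sum.neutral)
    then show ?thesis by simp
  next
    case False
    moreover have "SX \<ge> 0" "SY \<ge> 0" by (simp_all add: SX_def SY_def sum_nonneg)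
    ultimately have pos: "SX > 0" "SY > 0" by auto
    define X where "X = SX powr (1/s)"
    define Y where "Y = SY powr (1/t)"
    have XY: "X > 0" "Y > 0" "X powr s = SX" "Y powr t = SY"
      using pos s t by (simp_all add: X_def Y_def powr_powr)
    have "(\<Sum>i\<in>A. x i * y i) \<le> (\<Sum>i\<in>A. X * Y * ((\<bar>x i\<bar>/X) * (\<bar>y i\<bar>/Y)))"
      using XY by (intro sum_mono) (simp add: abs_mult[symmetric])
    also have "\<dots> \<le> (\<Sum>i\<in>A. X * Y * ((\<bar>x i\<bar>/X) powr s / s + (\<bar>y i\<bar>/Y) powr t / t))"
      by (rule sum_mono, rule mult_left_mono, rule Youngs_inequality) (use s t st XY in auto)
    also have "\<dots> = X * Y * ((\<Sum>i\<in>A. (\<bar>x i\<bar>/X) powr s) / s + (\<Sum>i\<in>A. (\<bar>y i\<bar>/Y) powr t) / t)"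
      by (simp add: sum_distrib_left[symmetric] sum.distrib sum_divide_distrib)
    also have "(\<Sum>i\<in>A. (\<bar>x i\<bar>/X) powr s) = 1"
      using pos XY by (simp add: powr_divide sum_divide_distrib[symmetric] SX_def)
    also have "(\<Sum>i\<in>A. (\<bar>y i\<bar>/Y) powr t) = 1"
      using pos XY by (simp add: powr_divide sum_divide_distrib[symmetric] SY_def)
    finally show ?thesis using st by (simp add: X_def Y_def SX_def SY_def)
  qed
qed

text \<open>Testing against the norming vector \<open>sgn (G i) \<bar>G i\<bar>^(s-1) / c i\<close>, scaled into the
  unit cube, recovers the s-norm of G.\<close>
lemma converse_Holder_inequality_sum:
  fixes G c :: "'a \<Rightarrow> real"
  assumes A: "finite A" and s: "s > 1" and t: "t = s/(s-1)"
    and G_c: "\<And>i. i \<in> A \<Longrightarrow> c i = 0 \<Longrightarrow> G i = 0"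
    and H: "\<And>\<epsilon>. (\<forall>i. \<bar>\<epsilon> i\<bar> \<le> 1) \<Longrightarrow>
        (\<Sum>i\<in>A. \<epsilon> i * (G i * c i)) \<le> C * (\<Sum>i\<in>A. \<bar>c i * \<epsilon> i\<bar> powr t) powr (1/t)"
  shows "(\<Sum>i\<in>A. \<bar>G i\<bar> powr s) \<le> C powr s"
proof -
  define u where "u i = sgn (G i) * \<bar>G i\<bar> powr (s-1)" for i
  define M where "M = 1 + (\<Sum>i\<in>A. \<bar>u i\<bar> / \<bar>c i\<bar>)"
  have M: "M \<ge> 1" unfolding M_def by (simp add: sum_nonneg)
  define \<epsilon> where "\<epsilon> i = (if c i = 0 \<or> i \<notin> A then 0 else u i / (c i * M))" for i
  have \<epsilon>_bound: "\<bar>\<epsilon> i\<bar> \<le> 1" for i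
  proof (cases "c i = 0 \<or> i \<notin> A")
    case False
    then have "\<bar>u i\<bar> / \<bar>c i\<bar> \<le> M"
      unfolding M_def using member_le_sum[of i A "\<lambda>i. \<bar>u i\<bar> / \<bar>c i\<bar>"] A by simp
    then show ?thesis using False M by (simp add: \<epsilon>_def abs_mult divide_simps mult.commute)
  qed (auto simp: \<epsilon>_def)
  define S where "S = (\<Sum>i\<in>A. \<bar>G i\<bar> powr s)"
  have t_pos: "t > 0" and t_s: "(s-1) * t = s" using s by (simp_all add: t)
  have G_powr: "\<bar>G i\<bar> * \<bar>G i\<bar> powr (s-1) = \<bar>G i\<bar> powr s" for i
    by (cases "G i = 0") (simp_all add: powr_mult_base)
  have lhs: "(\<Sum>i\<in>A. \<epsilon> i * (G i * c i)) = S / M"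
    unfolding S_def sum_divide_distrib
  proof (rule sum.cong[OF refl])
    fix i assume "i \<in> A"
    then show "\<epsilon> i * (G i * c i) = \<bar>G i\<bar> powr s / M"
      using G_c G_powr[of i] M by (auto simp: \<epsilon>_def u_def sgn_mult_self_eq abs_sgn mult_ac)
  qed
  have rhs: "(\<Sum>i\<in>A. \<bar>c i * \<epsilon> i\<bar> powr t) = S / M powr t"
    unfolding S_def sum_divide_distrib
  proof (rule sum.cong[OF refl])
    fix i assume "i \<in> A"
    then have "\<bar>c i * \<epsilon> i\<bar> = \<bar>G i\<bar> powr (s-1) / M"
      using G_c M s by (auto simp: \<epsilon>_def u_def abs_mult abs_sgn_eq)
    then show "\<bar>c i * \<epsilon> i\<bar> powr t = \<bar>G i\<bar> powr s / M powr t"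
      using t_s by (simp add: powr_divide powr_powr)
  qed
  have "S / M \<le> C * (S / M powr t) powr (1/t)"
    using H[of \<epsilon>] \<epsilon>_bound lhs rhs by simp
  also have "(S / M powr t) powr (1/t) = S powr (1/t) / M"
    using M t_pos by (simp add: powr_divide powr_powr)
  finally have S_le: "S \<le> C * S powr (1/t)"
    using M by (simp add: divide_simps)
  show ?thesis
  proof (cases "S = 0")
    case False
    moreover have "S \<ge> 0" by (simp add: S_def sum_nonneg)
    ultimately have S_pos: "S > 0" by simp
    have "S powr (1/s) * S powr (1/t) \<le> C * S powr (1/t)"
      using S_le S_pos s by (simp add: powr_add[symmetric] t divide_simps)
    then have "S powr (1/s) \<le> C"
      using S_pos by (simp add: mult_le_cancel_right)
    then have "(S powr (1/s)) powr s \<le> C powr s"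
      by (rule powr_mono2[rotated 2]) (use s in auto)
    then show ?thesis using S_pos s by (simp add: powr_powr S_def)
  qed (simp add: S_def)
qed

definition dual_cesaro_bound :: "real \<Rightarrow> real \<Rightarrow> (nat \<Rightarrow> nat \<Rightarrow> real) \<Rightarrow> (nat \<Rightarrow> real) \<Rightarrow> bool" where
  "dual_cesaro_bound C t a h \<longleftrightarrow> (\<forall>n m (R :: nat \<Rightarrow> nat \<Rightarrow> real). (\<forall>i j. \<bar>R i j\<bar> \<le> 1) \<longrightarrow>
     (\<Sum>i<n. \<Sum>j<m. R i j * a i j)
       \<le> C * (\<Sum>i<n. (1 / real (i + 1) powr t) * \<bar>\<Sum>j<min (i + 1) m. h j * R i j\<bar> powr t) powr (1 / t))"

definition row_cesaro_bound :: "real \<Rightarrow> (nat \<Rightarrow> nat \<Rightarrow> real) \<Rightarrow> (nat \<Rightarrow> real) \<Rightarrow> bool" where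
  "row_cesaro_bound C a h \<longleftrightarrow> (\<forall>n m (\<rho> :: nat \<Rightarrow> real). (\<forall>j. \<bar>\<rho> j\<bar> \<le> 1) \<longrightarrow>
     (\<Sum>j<m. \<rho> j * a n j) \<le> C * (1 / real (n + 1)) * \<bar>\<Sum>j<min (n + 1) m. h j * \<rho> j\<bar>)"

lemma dual_cesaro_bound_mono:
  assumes "dual_cesaro_bound C t a h" "C \<le> C'"
  shows "dual_cesaro_bound C' t a h"
  using assms unfolding dual_cesaro_bound_def by (meson mult_right_mono order_trans powr_ge_zero)

lemma dual_cesaro_bound_imp_row_cesaro_bound:
  assumes t: "t > 0" and dual: "dual_cesaro_bound C t a h"
  shows "row_cesaro_bound C a h"
  unfolding row_cesaro_bound_def
proof (intro allI impI)
  fix n m :: nat and \<rho> :: "nat \<Rightarrow> real" assume \<rho>: "\<forall>j. \<bar>\<rho> j\<bar> \<le> 1"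
  define R where "R i j = (if i = n then \<rho> j else 0)" for i j
  have "\<forall>i j. \<bar>R i j\<bar> \<le> 1" using \<rho> by (simp add: R_def)
  then have "(\<Sum>i<Suc n. \<Sum>j<m. R i j * a i j)
      \<le> C * (\<Sum>i<Suc n. (1 / real (i + 1) powr t) * \<bar>\<Sum>j<min (i + 1) m. h j * R i j\<bar> powr t) powr (1 / t)"
    using dual unfolding dual_cesaro_bound_def by blast
  moreover have "((1 / real (n + 1) powr t) * \<bar>\<Sum>j<min (n + 1) m. h j * \<rho> j\<bar> powr t) powr (1/t)
      = 1 / real (n + 1) * \<bar>\<Sum>j<min (n + 1) m. h j * \<rho> j\<bar>"
    using t by (simp add: powr_divide[symmetric] powr_powr)
  ultimately show "(\<Sum>j<m. \<rho> j * a n j) \<le> C * (1 / real (n + 1)) * \<bar>\<Sum>j<min (n + 1) m. h j * \<rho> j\<bar>"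
    by (simp add: R_def)
qed

lemma dual_cesaro_bound_one_iff: "dual_cesaro_bound C 1 a h \<longleftrightarrow> row_cesaro_bound C a h"
proof
  assume row: "row_cesaro_bound C a h"
  show "dual_cesaro_bound C 1 a h"
    unfolding dual_cesaro_bound_def
  proof (intro allI impI)
    fix n m :: nat and R :: "nat \<Rightarrow> nat \<Rightarrow> real" assume "\<forall>i j. \<bar>R i j\<bar> \<le> 1"
    then have "(\<Sum>i<n. \<Sum>j<m. R i j * a i j) \<le> (\<Sum>i<n. C * (1 / real (i + 1)) * \<bar>\<Sum>j<min (i + 1) m. h j * R i j\<bar>)"
      using row unfolding row_cesaro_bound_def by (intro sum_mono) blast
    then show "(\<Sum>i<n. \<Sum>j<m. R i j * a i j)
        \<le> C * (\<Sum>i<n. (1 / real (i + 1) powr 1) * \<bar>\<Sum>j<min (i + 1) m. h j * R i j\<bar> powr 1) powr (1 / 1)"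
      by (simp add: sum_distrib_left sum_nonneg mult.assoc)
  qed
qed (auto intro: dual_cesaro_bound_imp_row_cesaro_bound[of 1])

lemma cesaro_matrix_row_sum:
  assumes "cesaro_matrix a h g"
  shows "(\<Sum>j<m. R j * a i j) = g i * (1 / real (i + 1)) * (\<Sum>j<min (i + 1) m. h j * R j)"
proof -
  have "(\<Sum>j<m. R j * a i j) = (\<Sum>j\<in>{..<m} \<inter> {..i}. g i * (1 / real (i + 1)) * (h j * R j))"
    using assms unfolding sum.inter_restrict[OF finite_lessThan]
    by (intro sum.cong) (auto simp: cesaro_matrix_def)
  also have "{..<m} \<inter> {..i} = {..<min (i + 1) m}" by auto
  finally show ?thesis by (simp add: sum_distrib_left)
qed

lemma cesaro_matrix_row_cesaro_bound:
  assumes "cesaro_matrix a h g" "\<And>i. \<bar>g i\<bar> \<le> K"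
  shows "row_cesaro_bound K a h"
  unfolding row_cesaro_bound_def
proof (intro allI impI)
  fix n m :: nat and \<rho> :: "nat \<Rightarrow> real"
  have "(\<Sum>j<m. \<rho> j * a n j) = g n * (1 / real (n + 1)) * (\<Sum>j<min (n + 1) m. h j * \<rho> j)"
    by (rule cesaro_matrix_row_sum[OF assms(1)])
  also have "\<dots> \<le> \<bar>g n\<bar> * (1 / real (n + 1)) * \<bar>\<Sum>j<min (n + 1) m. h j * \<rho> j\<bar>"
    using abs_ge_self[of "g n * (1 / real (n + 1)) * (\<Sum>j<min (n + 1) m. h j * \<rho> j)"]
    by (simp add: abs_mult)
  also have "\<dots> \<le> K * (1 / real (n + 1)) * \<bar>\<Sum>j<min (n + 1) m. h j * \<rho> j\<bar>"
    using assms(2)[of n] by (intro mult_right_mono) auto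
  finally show "(\<Sum>j<m. \<rho> j * a n j) \<le> K * (1 / real (n + 1)) * \<bar>\<Sum>j<min (n + 1) m. h j * \<rho> j\<bar>" .
qed

lemma cesaro_matrix_dual_cesaro_bound:
  assumes s: "s > 1" and mat: "cesaro_matrix a h g" and g: "summable (\<lambda>i. \<bar>g i\<bar> powr s)"
  shows "dual_cesaro_bound (lp_norm s g) (s / (s - 1)) a h"
  unfolding dual_cesaro_bound_def
proof (intro allI impI)
  fix n m :: nat and R :: "nat \<Rightarrow> nat \<Rightarrow> real"
  define t where "t = s / (s - 1)"
  define u where "u i = 1 / real (i + 1) * (\<Sum>j<min (i + 1) m. h j * R i j)" for i
  have t: "t > 1" "1/s + 1/t = 1" using s by (simp_all add: t_def divide_simps)
  have "(\<Sum>i<n. \<Sum>j<m. R i j * a i j) = (\<Sum>i<n. g i * u i)"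
    by (simp add: cesaro_matrix_row_sum[OF mat] u_def)
  also have "\<dots> \<le> (\<Sum>i<n. \<bar>g i\<bar> powr s) powr (1/s) * (\<Sum>i<n. \<bar>u i\<bar> powr t) powr (1/t)"
    by (rule Holder_inequality_sum) (use s t in auto)
  also have "\<dots> \<le> lp_norm s g * (\<Sum>i<n. \<bar>u i\<bar> powr t) powr (1/t)"
  proof (rule mult_right_mono)
    have "(\<Sum>i<n. \<bar>g i\<bar> powr s) \<le> (\<Sum>i. \<bar>g i\<bar> powr s)"
      by (rule sum_le_suminf[OF g]) auto
    then show "(\<Sum>i<n. \<bar>g i\<bar> powr s) powr (1/s) \<le> lp_norm s g"
      unfolding lp_norm_def by (rule powr_mono2[rotated 2]) (use s in \<open>auto simp: sum_nonneg\<close>)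
  qed simp
  also have "(\<Sum>i<n. \<bar>u i\<bar> powr t)
      = (\<Sum>i<n. (1 / real (i + 1) powr t) * \<bar>\<Sum>j<min (i + 1) m. h j * R i j\<bar> powr t)"
    by (simp add: u_def abs_mult powr_mult powr_divide)
  finally show "(\<Sum>i<n. \<Sum>j<m. R i j * a i j) \<le> lp_norm s g * (\<Sum>i<n. (1 / real (i + 1) powr (s / (s - 1))) *
      \<bar>\<Sum>j<min (i + 1) m. h j * R i j\<bar> powr (s / (s - 1))) powr (1 / (s / (s - 1)))"
    by (simp add: t_def)
qed

lemma row_cesaro_bound_entry:
  assumes row: "row_cesaro_bound C a h" and C: "C \<ge> 0"
  shows "\<bar>a i j\<bar> \<le> C * (1 / real (i + 1)) * (if j \<le> i then \<bar>h j\<bar> else 0)"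
proof -
  define \<rho> where "\<rho> l = (if l = j then sgn (a i j) else 0)" for l
  have "\<forall>l. \<bar>\<rho> l\<bar> \<le> 1" by (simp add: \<rho>_def abs_sgn_eq)
  then have "(\<Sum>l<Suc j. \<rho> l * a i l) \<le> C * (1 / real (i + 1)) * \<bar>\<Sum>l<min (i + 1) (Suc j). h l * \<rho> l\<bar>"
    using row unfolding row_cesaro_bound_def by blast
  moreover have "(\<Sum>l<Suc j. \<rho> l * a i l) = \<bar>a i j\<bar>"
    by (simp add: \<rho>_def if_distrib cong: if_cong) (simp add: sgn_mult_self_eq mult.commute abs_sgn)
  moreover have "\<bar>\<Sum>l<min (i + 1) (Suc j). h l * \<rho> l\<bar> \<le> (if j \<le> i then \<bar>h j\<bar> else 0)"
    by (simp add: \<rho>_def if_distrib cong: if_cong) (auto simp: abs_mult abs_sgn_eq)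
  then have "C * (1 / real (i + 1)) * \<bar>\<Sum>l<min (i + 1) (Suc j). h l * \<rho> l\<bar>
      \<le> C * (1 / real (i + 1)) * (if j \<le> i then \<bar>h j\<bar> else 0)"
    using C by (intro mult_left_mono) auto
  ultimately show ?thesis by linarith
qed

lemma row_cesaro_bound_entries_proportional:
  assumes row: "row_cesaro_bound C a h" and "j \<le> i" "k \<le> i"
  shows "a i j * h k = a i k * h j"
proof (cases "j = k")
  case False
  define \<tau> where "\<tau> = 1 / (1 + \<bar>h j\<bar> + \<bar>h k\<bar>)"
  have \<tau>: "\<tau> > 0" by (simp add: \<tau>_def add_pos_nonneg)
  define m where "m = Suc (max j k)"
  have two_point_sum: "(\<Sum>l\<in>L. ((if l = j then A else 0) - (if l = k then B else 0)) * f l) = A * f j - B * f k"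
    if "finite L" "j \<in> L" "k \<in> L" for L A B and f :: "nat \<Rightarrow> real"
  proof -
    have "(\<Sum>l\<in>L. ((if l = j then A else 0) - (if l = k then B else 0)) * f l)
        = (\<Sum>l\<in>L. (if l = j then A * f l else 0) - (if l = k then B * f l else 0))"
      by (rule sum.cong) (auto simp: left_diff_distrib)
    then show ?thesis
      using that by (simp add: sum_subtractf sum.delta)
  qed
  have signed: "\<sigma> * \<tau> * (a i j * h k - a i k * h j) \<le> 0" if \<sigma>: "\<bar>\<sigma>\<bar> = 1" for \<sigma>
  proof -
    define \<rho> where "\<rho> l = \<sigma> * \<tau> * ((if l = j then h k else 0) - (if l = k then h j else 0))" for l
    have "\<bar>\<rho> l\<bar> \<le> 1" for l
    proof -
      have "\<bar>(if l = j then h k else 0) - (if l = k then h j else 0)\<bar> \<le> 1 + \<bar>h j\<bar> + \<bar>h k\<bar>"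
        by auto
      then show ?thesis using \<sigma> \<tau> by (simp add: \<rho>_def \<tau>_def abs_mult divide_simps add_pos_nonneg)
    qed
    then have bound: "(\<Sum>l<m. \<rho> l * a i l) \<le> C * (1 / real (i + 1)) * \<bar>\<Sum>l<min (i + 1) m. h l * \<rho> l\<bar>"
      using row unfolding row_cesaro_bound_def by blast
    have "(\<Sum>l<m. \<rho> l * a i l)
        = \<sigma> * \<tau> * (\<Sum>l<m. ((if l = j then h k else 0) - (if l = k then h j else 0)) * a i l)"
      by (simp add: \<rho>_def sum_distrib_left mult.assoc)
    also have "\<dots> = \<sigma> * \<tau> * (a i j * h k - a i k * h j)"
      by (subst two_point_sum) (auto simp: m_def)
    finally have lhs: "(\<Sum>l<m. \<rho> l * a i l) = \<sigma> * \<tau> * (a i j * h k - a i k * h j)" .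
    have "(\<Sum>l<min (i + 1) m. h l * \<rho> l)
        = \<sigma> * \<tau> * (\<Sum>l<min (i + 1) m. ((if l = j then h k else 0) - (if l = k then h j else 0)) * h l)"
      by (simp add: \<rho>_def sum_distrib_left mult_ac)
    also have "\<dots> = 0"
      by (subst two_point_sum) (use assms(2,3) in \<open>auto simp: m_def\<close>)
    finally show ?thesis
      using bound lhs by simp
  qed
  have "\<tau> * (a i j * h k - a i k * h j) \<le> 0" "- \<tau> * (a i j * h k - a i k * h j) \<le> 0"
    using signed[of 1] signed[of "-1"] by simp_all
  then show ?thesis using \<tau> by simp
qed simp

lemma row_cesaro_bound_imp_cesaro_matrix:
  assumes row: "row_cesaro_bound C a h" and C: "C \<ge> 0"
  obtains g where "cesaro_matrix a h g" "\<And>i. \<bar>g i\<bar> \<le> C" "\<And>i. (\<forall>j\<le>i. h j = 0) \<Longrightarrow> g i = 0"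
proof
  define j0 where "j0 = (LEAST j. h j \<noteq> 0)"
  define g where "g i = (if \<exists>j\<le>i. h j \<noteq> 0 then a i j0 * real (i + 1) / h j0 else 0)" for i
  have j0: "j0 \<le> i" "h j0 \<noteq> 0" if "\<exists>j\<le>i. h j \<noteq> 0" for i
    using that LeastI[of "\<lambda>j. h j \<noteq> 0"] Least_le[of "\<lambda>j. h j \<noteq> 0"] unfolding j0_def
    by (auto intro: order_trans)
  note entry = row_cesaro_bound_entry[OF row C]
  show "cesaro_matrix a h g"
    unfolding cesaro_matrix_def
  proof (intro allI)
    fix i j
    show "a i j = (if j \<le> i then g i * h j / real (i + 1) else 0)"
    proof (cases "j \<le> i \<and> h j \<noteq> 0")
      case True
      then have ex: "\<exists>j\<le>i. h j \<noteq> 0" by blast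
      have "a i j * h j0 = a i j0 * h j"
        using row_cesaro_bound_entries_proportional[OF row] True j0[OF ex] by blast
      then have "a i j = a i j0 * h j / h j0"
        using j0[OF ex] by (simp add: eq_divide_eq)
      then show ?thesis
        using True j0[OF ex] ex by (simp add: g_def)
    qed (use entry[of i j] in \<open>auto split: if_splits\<close>)
  qed
  show "\<bar>g i\<bar> \<le> C" for i
  proof (cases "\<exists>j\<le>i. h j \<noteq> 0")
    case True
    then have "\<bar>a i j0\<bar> \<le> C * (1 / real (i + 1)) * \<bar>h j0\<bar>" "h j0 \<noteq> 0"
      using entry[of i j0] j0 by auto
    then show ?thesis
      using True by (simp add: g_def abs_mult divide_simps mult.commute)
  qed (use C in \<open>auto simp: g_def\<close>)
  show "g i = 0" if "\<forall>j\<le>i. h j = 0" for i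
  proof -
    from that have "\<not> (\<exists>j\<le>i. h j \<noteq> 0)" by blast
    then show ?thesis by (simp only: g_def if_False)
  qed
qed

text \<open>Testing with matrices supported on the column j0 turns the dual bound into the hypothesis of
  the converse Holder inequality for the truncations of g, uniformly in their length.\<close>
lemma dual_cesaro_bound_imp_summable:
  assumes s: "s > 1" and dual: "dual_cesaro_bound C (s / (s - 1)) a h" and mat: "cesaro_matrix a h g"
    and g_zero: "\<And>i. (\<forall>j\<le>i. h j = 0) \<Longrightarrow> g i = 0"
  shows "summable (\<lambda>i. \<bar>g i\<bar> powr s)"
proof (cases "\<forall>j. h j = 0")
  case True
  then show ?thesis using g_zero by simp
next
  case False
  define t where "t = s / (s - 1)"
  define j0 where "j0 = (LEAST j. h j \<noteq> 0)"
  have h_j0: "h j0 \<noteq> 0"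
    using False LeastI_ex[of "\<lambda>j. h j \<noteq> 0"] by (simp add: j0_def)
  have h_below: "h j = 0" if "j < j0" for j
    using not_less_Least[OF that[unfolded j0_def]] by simp
  define c where "c i = (if j0 \<le> i then h j0 / real (i + 1) else 0)" for i
  have g_c: "g i = 0" if "c i = 0" for i
    using that h_j0 h_below by (intro g_zero) (auto simp: c_def split: if_splits)
  have col: "a i j0 = g i * c i" for i
    using mat by (simp add: cesaro_matrix_def c_def)
  have "(\<Sum>i<n. \<bar>g i\<bar> powr s) \<le> C powr s" for n
  proof (rule converse_Holder_inequality_sum[OF finite_lessThan s t_def g_c])
    fix \<epsilon> :: "nat \<Rightarrow> real" assume \<epsilon>: "\<forall>i. \<bar>\<epsilon> i\<bar> \<le> 1"
    define R where "R i j = (if j = j0 then \<epsilon> i else 0)" for i j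
    have "\<forall>i j. \<bar>R i j\<bar> \<le> 1" using \<epsilon> by (simp add: R_def)
    then have "(\<Sum>i<n. \<Sum>j<Suc j0. R i j * a i j)
        \<le> C * (\<Sum>i<n. (1 / real (i + 1) powr t) * \<bar>\<Sum>j<min (i + 1) (Suc j0). h j * R i j\<bar> powr t) powr (1 / t)"
      by (rule dual[unfolded dual_cesaro_bound_def t_def[symmetric], rule_format (no_asm)])
    moreover have "(\<Sum>j<Suc j0. R i j * a i j) = \<epsilon> i * (g i * c i)" for i
      by (simp add: R_def col if_distrib cong: if_cong)
    moreover have "(1 / real (i + 1) powr t) * \<bar>\<Sum>j<min (i + 1) (Suc j0). h j * R i j\<bar> powr t
        = \<bar>c i * \<epsilon> i\<bar> powr t" for i
      by (simp add: R_def c_def if_distrib abs_mult powr_divide powr_mult cong: if_cong)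
    ultimately show "(\<Sum>i<n. \<epsilon> i * (g i * c i)) \<le> C * (\<Sum>i<n. \<bar>c i * \<epsilon> i\<bar> powr t) powr (1/t)"
      by simp
  qed
  then show ?thesis
    by (intro summableI_nonneg_bounded[where x="C powr s"]) auto
qed

lemma cesaro_matrix_lp_iff_dual_cesaro_bound:
  assumes s: "s > 1"
  shows "(\<exists>g. in_lp (ereal s) g \<and> cesaro_matrix a h g) \<longleftrightarrow> (\<exists>C>0. dual_cesaro_bound C (s / (s - 1)) a h)"
proof
  assume "\<exists>g. in_lp (ereal s) g \<and> cesaro_matrix a h g"
  then obtain g where "summable (\<lambda>i. \<bar>g i\<bar> powr s)" "cesaro_matrix a h g"
    by (auto simp: in_lp_ereal_iff)
  then have "dual_cesaro_bound (lp_norm s g + 1) (s / (s - 1)) a h"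
    using cesaro_matrix_dual_cesaro_bound[OF s] dual_cesaro_bound_mono by fastforce
  moreover have "lp_norm s g + 1 > 0"
    by (simp add: lp_norm_def add_nonneg_pos)
  ultimately show "\<exists>C>0. dual_cesaro_bound C (s / (s - 1)) a h" by blast
next
  assume "\<exists>C>0. dual_cesaro_bound C (s / (s - 1)) a h"
  then obtain C where "C > 0" and dual: "dual_cesaro_bound C (s / (s - 1)) a h" by blast
  moreover have "s / (s - 1) > 0" using s by simp
  ultimately obtain g where "cesaro_matrix a h g" "\<And>i. (\<forall>j\<le>i. h j = 0) \<Longrightarrow> g i = 0"
    by (metis dual_cesaro_bound_imp_row_cesaro_bound row_cesaro_bound_imp_cesaro_matrix less_imp_le)
  with dual_cesaro_bound_imp_summable[OF s dual] show "\<exists>g. in_lp (ereal s) g \<and> cesaro_matrix a h g"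
    by (auto simp: in_lp_ereal_iff)
qed

lemma cesaro_matrix_bounded_iff_row_cesaro_bound:
  "(\<exists>g. in_lp \<infinity> g \<and> cesaro_matrix a h g) \<longleftrightarrow> (\<exists>C>0. row_cesaro_bound C a h)"
proof
  assume "\<exists>g. in_lp \<infinity> g \<and> cesaro_matrix a h g"
  then obtain g K where mat: "cesaro_matrix a h g" and K: "\<And>i. \<bar>g i\<bar> \<le> K"
    by (auto simp: in_lp_infinity_iff bdd_above_def)
  have "\<bar>g i\<bar> \<le> \<bar>K\<bar> + 1" for i
    using K[of i] abs_ge_self[of K] by linarith
  then have "row_cesaro_bound (\<bar>K\<bar> + 1) a h"
    by (rule cesaro_matrix_row_cesaro_bound[OF mat])
  then show "\<exists>C>0. row_cesaro_bound C a h"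
    by (intro exI[of _ "\<bar>K\<bar> + 1"]) auto
next
  assume "\<exists>C>0. row_cesaro_bound C a h"
  then obtain C g where mat: "cesaro_matrix a h g" and bound: "\<And>i. \<bar>g i\<bar> \<le> C"
    by (metis row_cesaro_bound_imp_cesaro_matrix less_imp_le)
  then show "\<exists>g. in_lp \<infinity> g \<and> cesaro_matrix a h g"
    unfolding in_lp_infinity_iff by (intro exI[of _ g] conjI bdd_aboveI2 mat) auto
qed

theorem proposition5p3:
  fixes p q r :: real
    and T :: "(nat \<Rightarrow> real) \<Rightarrow> (nat \<Rightarrow> real)"
    and h :: "nat \<Rightarrow> real"
    and a :: "nat \<Rightarrow> nat \<Rightarrow> real"
    and s :: ereal and s' :: real
  assumes "1 \<le> p" and "1 < q" and "1 < r"
    and "bounded_lin_op p q T"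
    and "\<exists>x. in_lp (ereal p) x \<and> T x \<noteq> (\<lambda>_. 0)"
    and a_def: "\<And>i j. a i j = T (unit_vec j) i"
    and "in_lp (s_exp p r) h"
    and s_def: "s = s_exp r q" and s'_def: "s' = conj_exp s"
  shows "((\<exists>g. in_lp s g \<and>
             (\<forall>x. in_lp (ereal p) x \<longrightarrow> T x = (\<lambda>n. g n * cesaro (\<lambda>k. h k * x k) n)))
          \<longleftrightarrow>
          (\<exists>g. in_lp s g \<and>
             (\<forall>i j. a i j = (if j \<le> i then g i * h j / real (i + 1) else 0))))
       \<and>
         ((\<exists>g. in_lp s g \<and>
             (\<forall>i j. a i j = (if j \<le> i then g i * h j / real (i + 1) else 0)))
          \<longleftrightarrow>
          (\<exists>C>0. \<forall>n m (R :: nat \<Rightarrow> nat \<Rightarrow> real). (\<forall>i j. \<bar>R i j\<bar> \<le> 1) \<longrightarrow>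
             (\<Sum>i<n. \<Sum>j<m. R i j * a i j)
               \<le> C * (\<Sum>i<n. (1 / real (i + 1) powr s') *
                        \<bar>\<Sum>j<min (i + 1) m. h j * R i j\<bar> powr s') powr (1 / s')))
       \<and>
         (r \<le> q \<longrightarrow>
          ((\<exists>C>0. \<forall>n m (R :: nat \<Rightarrow> nat \<Rightarrow> real). (\<forall>i j. \<bar>R i j\<bar> \<le> 1) \<longrightarrow>
             (\<Sum>i<n. \<Sum>j<m. R i j * a i j)
               \<le> C * (\<Sum>i<n. (1 / real (i + 1) powr s') *
                        \<bar>\<Sum>j<min (i + 1) m. h j * R i j\<bar> powr s') powr (1 / s'))
           \<longleftrightarrow>
           (\<exists>C>0. \<forall>n m (\<rho> :: nat \<Rightarrow> real). (\<forall>j. \<bar>\<rho> j\<bar> \<le> 1) \<longrightarrow>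
             (\<Sum>j<m. \<rho> j * a n j)
               \<le> C * (1 / real (n + 1)) * \<bar>\<Sum>j<min (n + 1) m. h j * \<rho> j\<bar>)))"
proof -
  have operator: "(\<forall>x. in_lp (ereal p) x \<longrightarrow> T x = (\<lambda>n. g n * cesaro (\<lambda>k. h k * x k) n))
      \<longleftrightarrow> cesaro_matrix a h g" for g
    using cesaro_matrix_iff_operator[OF assms(4) _ _ a_def] assms(1,2) by simp
  have dual: "(\<exists>g. in_lp s g \<and> cesaro_matrix a h g) \<longleftrightarrow> (\<exists>C>0. dual_cesaro_bound C s' a h)"
  proof (cases "q < r")
    case True
    have "r < q * r"
      using assms(2,3) mult_strict_right_mono[of 1 q r] by simp
    then have "r - q < r * q"
      using assms(2) by (simp add: mult.commute)
    then have "r * q / (r - q) > 1"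
      using True by (simp add: less_divide_eq)
    from cesaro_matrix_lp_iff_dual_cesaro_bound[OF this] show ?thesis
      using True by (simp add: s_def s'_def s_exp_def conj_exp_def)
  next
    case False
    then show ?thesis
      using cesaro_matrix_bounded_iff_row_cesaro_bound dual_cesaro_bound_one_iff
      by (simp add: s_def s'_def s_exp_def conj_exp_def)
  qed
  have "r \<le> q \<Longrightarrow> s' = 1"
    by (simp add: s_def s'_def s_exp_def conj_exp_def)
  then show ?thesis
    using operator dual dual_cesaro_bound_one_iff
    unfolding cesaro_matrix_def dual_cesaro_bound_def row_cesaro_bound_def by auto
qed

end
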